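(* Under the hypotheses of Proposition 1 (coin $U=\begin{bmatrix} a&b\\c&d\end{bmatrix}$ unitary with $abcd\ne0$, $\Delta=\det U=e^{i\xi}$, $\cos\phi_0=|a|$ with $\phi_0\in(0,\pi/2)$, $\lambda\in\{\pm e^{i(\phi_0+\xi/2)},\pm e^{i(-\phi_0+\xi/2)}\}$, $\gamma=(\lambda+\Delta\bar\lambda)/(2a)$), one has $|\gamma|=1$ and $|\lambda-\Delta\bar\lambda|^2/(4|b|^2)=1$. Moreover, taking $\Psi_0=\Psi$ with $\Psi^L(x)=(A+xB)\gamma^x$, $\Psi^R(x)=\{(A+xB)\frac{\lambda-\Delta\bar\lambda}{2}-\lambda B\}\gamma^{x-1}/b$ ($A,B\in\mathbb{C}$, $|A|+|B|\neq0$), the measure $\mu_n=\phi((U^{(s)})^n\Psi_0)$ satisfies, for all $n\ge0$ and $x\in\mathbb{Z}$, $$\mu_n(x)=2|A+xB|^2-2x|B|^2+\frac{|B|^2-\Re\big(A\bar B(1-\Delta\bar\lambda^2)\big)}{|b|^2}.$$ In particular this $\mu_0$ belongs to $\mathcal{M}_s(U)$.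
   Context: Two-state quantum walk on $\mathbb{Z}$: $(U^{(s)}\Psi)^L(x)=a\Psi^L(x+1)+b\Psi^R(x+1)$, $(U^{(s)}\Psi)^R(x)=c\Psi^L(x-1)+d\Psi^R(x-1)$; $\phi(\Psi)(x)=|\Psi^L(x)|^2+|\Psi^R(x)|^2$; $\mathcal{M}_s(U)=\{\mu\in[0,\infty)^{\mathbb{Z}}\setminus\{0\}:\exists\Psi_0$ with $\phi((U^{(s)})^n\Psi_0)=\mu$ for all $n\ge0\}$. $\Re(z)$ denotes the real part. *)

theory Defs
  imports Complex_Main
begin

type_synonym qstate = "int \<Rightarrow> complex \<times> complex"  (* (Psi^L(x), Psi^R(x)) *)

definition unitary2 :: "complex \<Rightarrow> complex \<Rightarrow> complex \<Rightarrow> complex \<Rightarrow> bool" where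
  "unitary2 a b c d \<longleftrightarrow>
     cnj a * a + cnj c * c = 1 \<and> cnj a * b + cnj c * d = 0 \<and>
     cnj b * a + cnj d * c = 0 \<and> cnj b * b + cnj d * d = 1"

definition qw_step :: "complex \<Rightarrow> complex \<Rightarrow> complex \<Rightarrow> complex \<Rightarrow> qstate \<Rightarrow> qstate" where
  "qw_step a b c d \<Psi> = (\<lambda>x.
     (a * fst (\<Psi> (x + 1)) + b * snd (\<Psi> (x + 1)),
      c * fst (\<Psi> (x - 1)) + d * snd (\<Psi> (x - 1))))"

definition qw_phi :: "qstate \<Rightarrow> int \<Rightarrow> real" where
  "qw_phi \<Psi> x = (cmod (fst (\<Psi> x)))\<^sup>2 + (cmod (snd (\<Psi> x)))\<^sup>2"

definition stat_measures :: "complex \<Rightarrow> complex \<Rightarrow> complex \<Rightarrow> complex \<Rightarrow> (int \<Rightarrow> real) set" where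
  "stat_measures a b c d =
     {\<mu>. (\<forall>x. 0 \<le> \<mu> x) \<and> \<mu> \<noteq> (\<lambda>_. 0) \<and>
          (\<exists>\<Psi>0. \<forall>n. qw_phi ((qw_step a b c d ^^ n) \<Psi>0) = \<mu>)}"

end

theory Submission
  imports Defs
begin

(* Idea: for the eigenvalues lam = sigma * cis(t + xi/2), sigma = +-1, cos t = |a|, the numbers
   gamma = (lam + Delta cnj lam)/(2a) and h = (lam - Delta cnj lam)/2 satisfy
       |gamma| = 1,  |h| = |b|,  lam = a gamma + h,  d = a gamma^2,  b c = h^2.
   The last three relations are exactly what is needed for the state
       Psi(x) = ((A + xB) gamma^x, ((A + xB) h - lam B) gamma^(x-1) / b)
   to be an eigenvector of the walk operator with eigenvalue lam.  Since |lam| = 1 the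
   density phi(U^n Psi) does not depend on n, so phi(Psi) is a stationary measure, and
   |gamma| = 1 turns phi(Psi)(x) into an explicit quadratic expression in x. *)

(* Columns and rows of a unitary coin are unit vectors; the row identity |a|^2 + |b|^2 = 1
   is what links cos t = |a| to sin t = |b|. *)
lemma unitary2_norms:
  assumes "unitary2 a b c d"
  shows "(cmod a)\<^sup>2 + (cmod c)\<^sup>2 = 1" "(cmod b)\<^sup>2 + (cmod d)\<^sup>2 = 1"
    "(cmod a)\<^sup>2 + (cmod b)\<^sup>2 = 1"
proof -
  note U = assms[unfolded unitary2_def]
  have "complex_of_real ((cmod a)\<^sup>2 + (cmod c)\<^sup>2) = 1"
    using U by (simp only: of_real_add complex_norm_square) (simp add: mult.commute)
  then show ac: "(cmod a)\<^sup>2 + (cmod c)\<^sup>2 = 1" using of_real_eq_1_iff by blast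
  have "complex_of_real ((cmod b)\<^sup>2 + (cmod d)\<^sup>2) = 1"
    using U by (simp only: of_real_add complex_norm_square) (simp add: mult.commute)
  then show bd: "(cmod b)\<^sup>2 + (cmod d)\<^sup>2 = 1" using of_real_eq_1_iff by blast
  have "cnj a * b = - (cnj c * d)" using U by (simp add: eq_neg_iff_add_eq_0)
  then have "cmod a * cmod b = cmod c * cmod d" by (metis norm_minus_cancel complex_mod_cnj norm_mult)
  then have "(cmod a)\<^sup>2 * (cmod b)\<^sup>2 = (1 - (cmod a)\<^sup>2) * (1 - (cmod b)\<^sup>2)"
    using ac bd by (metis add_diff_cancel_left' power_mult_distrib)
  then show "(cmod a)\<^sup>2 + (cmod b)\<^sup>2 = 1" by (simp add: algebra_simps)
qed

lemma unitary2_det_cnj: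
  assumes "unitary2 a b c d"
  shows "d = (a * d - b * c) * cnj a"
proof -
  note U = assms[unfolded unitary2_def]
  have "(a * d - b * c) * cnj a = (cnj a * a + cnj c * c) * d - c * (cnj a * b + cnj c * d)"
    by (simp add: algebra_simps)
  also have "\<dots> = d" using U by simp
  finally show ?thesis ..
qed

lemma of_real_cmod_square: "(complex_of_real (cmod z))\<^sup>2 = z * cnj z"
  by (simp only: of_real_power[symmetric] complex_norm_square)

lemma cis_half_square: "(cis (\<xi> / 2))\<^sup>2 = cis \<xi>"
  by (simp add: power2_eq_square cis_mult)

lemma eigenvalue_cases:
  fixes \<phi>0 \<xi> :: real
  assumes "lam \<in> {cis (\<phi>0 + \<xi> / 2), - cis (\<phi>0 + \<xi> / 2), cis (- \<phi>0 + \<xi> / 2), - cis (- \<phi>0 + \<xi> / 2)}"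
  obtains \<sigma> t :: real where "\<sigma> = 1 \<or> \<sigma> = -1" and "cos t = cos \<phi>0" and "lam = \<sigma> * cis (t + \<xi> / 2)"
proof -
  have "cos (- \<phi>0) = cos \<phi>0" by simp
  then show ?thesis
    using assms that[of 1 \<phi>0] that[of "-1" \<phi>0] that[of 1 "- \<phi>0"] that[of "-1" "- \<phi>0"] by auto
qed

lemma eigenvalue_sum_diff:
  fixes \<sigma> t \<xi> :: real
  assumes "\<sigma> = 1 \<or> \<sigma> = -1" and "lam = \<sigma> * cis (t + \<xi> / 2)"
  shows "cmod lam = 1"
    "lam + cis \<xi> * cnj lam = 2 * (\<sigma> * cos t) * cis (\<xi> / 2)"
    "lam - cis \<xi> * cnj lam = 2 * \<i> * (\<sigma> * sin t) * cis (\<xi> / 2)"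
proof -
  show "cmod lam = 1" using assms by (auto simp: norm_mult)
  have "cis \<xi> * cnj lam = \<sigma> * (cis \<xi> * cis (- (t + \<xi> / 2)))"
    using assms(2) by (simp add: cis_cnj)
  also have "cis \<xi> * cis (- (t + \<xi> / 2)) = cis (\<xi> / 2 - t)" by (simp add: cis_mult)
  finally have reflected: "cis \<xi> * cnj lam = \<sigma> * cis (\<xi> / 2 - t)" .
  show "lam + cis \<xi> * cnj lam = 2 * (\<sigma> * cos t) * cis (\<xi> / 2)"
    unfolding reflected unfolding assms(2)
    by (simp add: complex_eq_iff cos_add sin_add cos_diff sin_diff algebra_simps)
  show "lam - cis \<xi> * cnj lam = 2 * \<i> * (\<sigma> * sin t) * cis (\<xi> / 2)"
    unfolding reflected unfolding assms(2)
    by (simp add: complex_eq_iff cos_add sin_add cos_diff sin_diff algebra_simps)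
qed

lemma coin_gamma:
  fixes \<sigma> t \<xi> :: real
  assumes U: "unitary2 a b c d" and a0: "a \<noteq> 0" and det: "a * d - b * c = cis \<xi>"
    and \<sigma>: "\<sigma> = 1 \<or> \<sigma> = -1" and cos_t: "cos t = cmod a"
    and lam: "lam = \<sigma> * cis (t + \<xi> / 2)"
    and \<gamma>: "\<gamma> = (lam + cis \<xi> * cnj lam) / (2 * a)"
  shows "cmod \<gamma> = 1" "d = a * \<gamma>\<^sup>2"
proof -
  have a\<gamma>: "a * \<gamma> = (\<sigma> * cos t) * cis (\<xi> / 2)"
    using eigenvalue_sum_diff(2)[OF \<sigma> lam] a0 \<gamma> by simp
  have "cmod (a * \<gamma>) = cmod a"
    using \<sigma> cos_t by (auto simp: a\<gamma> norm_mult)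
  then show "cmod \<gamma> = 1" using a0 by (simp add: norm_mult)
  have "a * (a * \<gamma>\<^sup>2) = (a * \<gamma>)\<^sup>2" by (simp add: power2_eq_square)
  also have "\<dots> = (cmod a)\<^sup>2 * cis \<xi>"
    using \<sigma> cos_t by (auto simp: a\<gamma> power_mult_distrib cis_half_square)
  also have "\<dots> = a * ((a * d - b * c) * cnj a)"
    by (simp add: det of_real_cmod_square)
  finally show "d = a * \<gamma>\<^sup>2" using a0 unitary2_det_cnj[OF U] by simp
qed

lemma coin_h:
  fixes \<sigma> t \<xi> :: real
  assumes U: "unitary2 a b c d" and det: "a * d - b * c = cis \<xi>"
    and \<sigma>: "\<sigma> = 1 \<or> \<sigma> = -1" and cos_t: "cos t = cmod a"
    and lam: "lam = \<sigma> * cis (t + \<xi> / 2)"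
    and h: "h = (lam - cis \<xi> * cnj lam) / 2"
  shows "cmod h = cmod b" "b * c = h\<^sup>2"
proof -
  have h_eq: "h = \<i> * (\<sigma> * sin t) * cis (\<xi> / 2)"
    using eigenvalue_sum_diff(3)[OF \<sigma> lam] h by simp
  have sin_sq: "(sin t)\<^sup>2 = (cmod b)\<^sup>2"
    using unitary2_norms(3)[OF U] cos_t sin_cos_squared_add[of t] by simp
  have "cmod h = \<bar>sin t\<bar>" using \<sigma> by (auto simp: h_eq norm_mult)
  also have "\<dots> = cmod b" using sin_sq by (metis abs_norm_cancel real_sqrt_abs)
  finally show "cmod h = cmod b" .
  have "(complex_of_real (sin t))\<^sup>2 = 1 - (complex_of_real (cos t))\<^sup>2"
    by (metis of_real_1 of_real_diff of_real_power sin_squared_eq)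
  then have sin_sq_a: "(complex_of_real (sin t))\<^sup>2 = 1 - a * cnj a"
    by (simp only: cos_t of_real_cmod_square)
  have "h\<^sup>2 = - (sin t)\<^sup>2 * cis \<xi>"
    using \<sigma> by (auto simp: h_eq power_mult_distrib cis_half_square)
  also have "\<dots> = a * ((a * d - b * c) * cnj a) - (a * d - b * c)"
    by (simp add: det sin_sq_a algebra_simps)
  also have "\<dots> = a * d - (a * d - b * c)" by (simp only: flip: unitary2_det_cnj[OF U])
  finally show "b * c = h\<^sup>2" by simp
qed

definition qstate_scale :: "complex \<Rightarrow> qstate \<Rightarrow> qstate" where
  "qstate_scale k \<Psi> = (\<lambda>x. (k * fst (\<Psi> x), k * snd (\<Psi> x)))"

lemma qw_step_scale: "qw_step a b c d (qstate_scale k \<Psi>) = qstate_scale k (qw_step a b c d \<Psi>)"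
  unfolding qw_step_def qstate_scale_def by (auto simp: algebra_simps)

lemma qstate_scale_mult: "qstate_scale k (qstate_scale l \<Psi>) = qstate_scale (k * l) \<Psi>"
  unfolding qstate_scale_def by (simp add: mult.assoc)

lemma qw_phi_scale: "cmod k = 1 \<Longrightarrow> qw_phi (qstate_scale k \<Psi>) = qw_phi \<Psi>"
  unfolding qw_phi_def qstate_scale_def by (simp add: norm_mult)

lemma eigenstate_iterate:
  assumes "qw_step a b c d \<Psi> = qstate_scale k \<Psi>"
  shows "(qw_step a b c d ^^ n) \<Psi> = qstate_scale (k ^ n) \<Psi>"
proof (induction n)
  case 0
  show ?case by (simp add: qstate_scale_def)
next
  case (Suc n)
  have "(qw_step a b c d ^^ Suc n) \<Psi> = qstate_scale (k ^ n) (qw_step a b c d \<Psi>)"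
    using Suc by (simp add: qw_step_scale)
  also have "\<dots> = qstate_scale (k ^ Suc n) \<Psi>"
    by (simp add: assms qstate_scale_mult mult.commute)
  finally show ?case .
qed

lemma eigenstate_density_invariant:
  assumes "qw_step a b c d \<Psi> = qstate_scale k \<Psi>" and "cmod k = 1"
  shows "qw_phi ((qw_step a b c d ^^ n) \<Psi>) = qw_phi \<Psi>"
  using assms(2) by (simp add: eigenstate_iterate[OF assms(1)] qw_phi_scale norm_power)

lemma eigenstate_stationary:
  assumes "qw_step a b c d \<Psi> = qstate_scale k \<Psi>" and "cmod k = 1" and "qw_phi \<Psi> \<noteq> (\<lambda>_. 0)"
  shows "qw_phi \<Psi> \<in> stat_measures a b c d"
  using assms eigenstate_density_invariant[OF assms(1,2)]
  by (auto simp: stat_measures_def qw_phi_def)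

definition lin_geom_state ::
    "complex \<Rightarrow> complex \<Rightarrow> complex \<Rightarrow> complex \<Rightarrow> complex \<Rightarrow> complex \<Rightarrow> qstate" where
  "lin_geom_state A B \<gamma> h lam b = (\<lambda>x.
     ((A + of_int x * B) * \<gamma> powi x,
      ((A + of_int x * B) * h - lam * B) * \<gamma> powi (x - 1) / b))"

(* The two components of the eigenvalue equation U Psi = lam Psi, with g standing for a power
   of gamma; they only use lam = a gamma + h, d = a gamma^2 and b c = h^2. *)
lemma lin_geom_left_component:
  fixes a b h lam \<gamma> A B X g :: complex
  assumes "lam = a * \<gamma> + h" and "b \<noteq> 0"
  shows "a * ((A + (X + 1) * B) * (g * \<gamma>)) + b * (((A + (X + 1) * B) * h - lam * B) * g / b)
       = lam * ((A + X * B) * g)"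
  using assms by (simp add: field_simps)

lemma lin_geom_right_component:
  fixes a b c d h lam \<gamma> A B X g :: complex
  assumes "lam = a * \<gamma> + h" and "d = a * \<gamma>\<^sup>2" and "b * c = h\<^sup>2" and "b \<noteq> 0"
  shows "c * ((A + (X - 1) * B) * (g * \<gamma>)) + d * (((A + (X - 1) * B) * h - lam * B) * g / b)
       = lam * (((A + X * B) * h - lam * B) * (g * \<gamma>) / b)"
proof -
  have c_eq: "c = h\<^sup>2 / b" using assms(3,4) by (simp add: field_simps)
  show ?thesis
    unfolding c_eq assms(1,2) using assms(4) by (simp add: field_simps power2_eq_square)
qed

lemma lin_geom_state_eigen:
  assumes "lam = a * \<gamma> + h" and "d = a * \<gamma>\<^sup>2" and "b * c = h\<^sup>2" and "b \<noteq> 0" and "\<gamma> \<noteq> 0"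
  shows "qw_step a b c d (lin_geom_state A B \<gamma> h lam b) = qstate_scale lam (lin_geom_state A B \<gamma> h lam b)"
proof (rule ext)
  fix x :: int
  have up: "\<gamma> powi (x + 1) = \<gamma> powi x * \<gamma>" and down: "\<gamma> powi (x - 1) = \<gamma> powi (x - 1 - 1) * \<gamma>"
    using assms(5) power_int_add_1[of \<gamma> "x - 1 - 1"] by (simp_all add: power_int_add_1)
  show "qw_step a b c d (lin_geom_state A B \<gamma> h lam b) x = qstate_scale lam (lin_geom_state A B \<gamma> h lam b) x"
    unfolding qw_step_def qstate_scale_def lin_geom_state_def
    using lin_geom_left_component[OF assms(1,4), of A "of_int x" B "\<gamma> powi x"]
      lin_geom_right_component[OF assms(1-4), of A "of_int x" B "\<gamma> powi (x - 1 - 1)"]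
    by (simp add: up down)
qed

lemma qw_phi_lin_geom_state:
  assumes "cmod \<gamma> = 1"
  shows "qw_phi (lin_geom_state A B \<gamma> h lam b) x
       = (cmod (A + of_int x * B))\<^sup>2 + (cmod ((A + of_int x * B) * h - lam * B))\<^sup>2 / (cmod b)\<^sup>2"
  using assms by (simp add: qw_phi_def lin_geom_state_def norm_mult norm_divide norm_power_int power_divide)

lemma cmod_diff_power2:
  fixes p q :: complex
  shows "(cmod (p - q))\<^sup>2 = (cmod p)\<^sup>2 + (cmod q)\<^sup>2 - 2 * Re (p * cnj q)"
  unfolding cmod_power2 by (simp add: power2_eq_square algebra_simps)

(* Evaluation of that density: with |lam| = |Delta| = 1 one has 2 h cnj lam = w and
   Re w = 2 |h|^2 for w = 1 - Delta cnj lam^2, which turns the second square into a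
   polynomial in x. *)
lemma density_identity:
  fixes A B h lam D b :: complex and x :: int
  assumes lam: "cmod lam = 1" and D: "cmod D = 1" and h: "h = (lam - D * cnj lam) / 2"
    and hb: "cmod h = cmod b" and b: "b \<noteq> 0"
  shows "(cmod (A + of_int x * B))\<^sup>2 + (cmod ((A + of_int x * B) * h - lam * B))\<^sup>2 / (cmod b)\<^sup>2
       = 2 * (cmod (A + of_int x * B))\<^sup>2 - 2 * of_int x * (cmod B)\<^sup>2
         + ((cmod B)\<^sup>2 - Re (A * cnj B * (1 - D * (cnj lam)\<^sup>2))) / (cmod b)\<^sup>2"
proof -
  define u where "u = A + of_int x * B"
  define w where "w = 1 - D * (cnj lam)\<^sup>2"
  have lam_cnj: "lam * cnj lam = 1" using lam by (simp flip: complex_norm_square)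
  have hw: "2 * (h * cnj lam) = w"
    unfolding h w_def using lam_cnj by (simp add: field_simps power2_eq_square)
  have "4 * (cmod h)\<^sup>2 = (cmod (lam - D * cnj lam))\<^sup>2"
    unfolding h by (simp add: norm_divide power_divide)
  also have "\<dots> = 2 - 2 * Re (lam * (cnj D * lam))"
    using lam D by (simp add: cmod_diff_power2 norm_mult)
  also have "\<dots> = 2 * Re w"
    unfolding w_def by (simp add: power2_eq_square algebra_simps)
  finally have Re_w: "Re w = 2 * (cmod b)\<^sup>2" using hb by simp
  have "(cmod (u * h - lam * B))\<^sup>2 = (cmod u)\<^sup>2 * (cmod b)\<^sup>2 + (cmod B)\<^sup>2 - Re (u * cnj B * w)"
    using lam hb by (simp add: cmod_diff_power2 norm_mult power_mult_distrib flip: hw) (simp add: algebra_simps)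
  also have "Re (u * cnj B * w) = Re (A * cnj B * w) + of_int x * (cmod B)\<^sup>2 * Re w"
    unfolding u_def cmod_power2 by (simp add: power2_eq_square algebra_simps)
  finally have "(cmod (u * h - lam * B))\<^sup>2 = (cmod u)\<^sup>2 * (cmod b)\<^sup>2 + (cmod B)\<^sup>2
      - Re (A * cnj B * w) - 2 * of_int x * (cmod B)\<^sup>2 * (cmod b)\<^sup>2"
    using Re_w by simp
  then show ?thesis
    using b unfolding u_def[symmetric] w_def[symmetric] by (simp add: field_simps)
qed

lemma lin_geom_state_nonzero:
  assumes "\<gamma> \<noteq> 0" and "cmod A + cmod B \<noteq> 0"
  shows "qw_phi (lin_geom_state A B \<gamma> h lam b) \<noteq> (\<lambda>_. 0)"
proof
  assume vanish: "qw_phi (lin_geom_state A B \<gamma> h lam b) = (\<lambda>_. 0)"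
  have "A + of_int x * B = 0" for x :: int
  proof -
    have "(cmod ((A + of_int x * B) * \<gamma> powi x))\<^sup>2 \<le> 0"
      using fun_cong[OF vanish, of x] by (simp add: qw_phi_def lin_geom_state_def)
    then show ?thesis using assms(1) by simp
  qed
  from this[of 0] this[of 1] have "A = 0" "B = 0" by simp_all
  with assms(2) show False by simp
qed

theorem corollary1:
  fixes a b c d lam A B :: complex and \<xi> \<phi>0 :: real
  assumes "unitary2 a b c d"
    and "a * b * c * d \<noteq> 0"
    and "a * d - b * c = cis \<xi>"
    and "0 < \<phi>0" "\<phi>0 < pi / 2" "cos \<phi>0 = cmod a"
    and "lam \<in> {cis (\<phi>0 + \<xi> / 2), - cis (\<phi>0 + \<xi> / 2),
               cis (- \<phi>0 + \<xi> / 2), - cis (- \<phi>0 + \<xi> / 2)}"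
    and "cmod A + cmod B \<noteq> 0"
  defines "\<Delta> \<equiv> a * d - b * c"
  defines "\<gamma> \<equiv> (lam + \<Delta> * cnj lam) / (2 * a)"
  defines "\<Psi>0 \<equiv> (\<lambda>x::int.
      ((A + of_int x * B) * \<gamma> powi x,
       ((A + of_int x * B) * ((lam - \<Delta> * cnj lam) / 2) - lam * B) * \<gamma> powi (x - 1) / b))"
  shows "cmod \<gamma> = 1 \<and>
    (cmod (lam - \<Delta> * cnj lam))\<^sup>2 / (4 * (cmod b)\<^sup>2) = 1 \<and>
    (\<forall>n::nat. \<forall>x::int. qw_phi ((qw_step a b c d ^^ n) \<Psi>0) x =
           2 * (cmod (A + of_int x * B))\<^sup>2 - 2 * of_int x * (cmod B)\<^sup>2
           + ((cmod B)\<^sup>2 - Re (A * cnj B * (1 - \<Delta> * (cnj lam)\<^sup>2))) / (cmod b)\<^sup>2) \<and>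
    qw_phi \<Psi>0 \<in> stat_measures a b c d"
proof -
  define h where "h = (lam - \<Delta> * cnj lam) / 2"
  have a0: "a \<noteq> 0" and b0: "b \<noteq> 0" using assms(2) by auto
  have \<Delta>: "\<Delta> = cis \<xi>" using assms(3) by (simp add: \<Delta>_def)
  obtain \<sigma> t :: real where \<sigma>: "\<sigma> = 1 \<or> \<sigma> = -1" and cos_t: "cos t = cmod a"
    and lam: "lam = \<sigma> * cis (t + \<xi> / 2)"
    using eigenvalue_cases[OF assms(7)] assms(6) by metis
  have \<gamma>1: "cmod \<gamma> = 1" and d\<gamma>: "d = a * \<gamma>\<^sup>2"
    using coin_gamma[OF assms(1) a0 assms(3) \<sigma> cos_t lam] by (simp_all add: \<gamma>_def \<Delta>)
  have hb: "cmod h = cmod b" and bch: "b * c = h\<^sup>2"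
    using coin_h[OF assms(1,3) \<sigma> cos_t lam h_def[unfolded \<Delta>]] by simp_all
  have lam_split: "lam = a * \<gamma> + h" using a0 by (simp add: \<gamma>_def h_def field_simps)
  have \<Psi>0: "\<Psi>0 = lin_geom_state A B \<gamma> h lam b"
    by (simp add: \<Psi>0_def lin_geom_state_def h_def)
  have \<gamma>0: "\<gamma> \<noteq> 0" using \<gamma>1 by auto
  have eigen: "qw_step a b c d \<Psi>0 = qstate_scale lam \<Psi>0"
    unfolding \<Psi>0 by (rule lin_geom_state_eigen[OF lam_split d\<gamma> bch b0 \<gamma>0])
  have lam1: "cmod lam = 1" by (rule eigenvalue_sum_diff(1)[OF \<sigma> lam])
  have density: "qw_phi \<Psi>0 x = 2 * (cmod (A + of_int x * B))\<^sup>2 - 2 * of_int x * (cmod B)\<^sup>2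
      + ((cmod B)\<^sup>2 - Re (A * cnj B * (1 - \<Delta> * (cnj lam)\<^sup>2))) / (cmod b)\<^sup>2" for x
    unfolding \<Psi>0 qw_phi_lin_geom_state[OF \<gamma>1]
    by (rule density_identity[OF lam1 _ h_def hb b0]) (simp add: \<Delta>)
  have b_ratio: "(cmod (lam - \<Delta> * cnj lam))\<^sup>2 / (4 * (cmod b)\<^sup>2) = 1"
    using hb b0 by (simp add: h_def norm_divide power_divide)
  have stationary: "qw_phi \<Psi>0 \<in> stat_measures a b c d"
    using eigenstate_stationary[OF eigen lam1] lin_geom_state_nonzero[OF \<gamma>0 assms(8)]
    by (simp add: \<Psi>0)
  show ?thesis
    by (intro conjI allI \<gamma>1 b_ratio stationary)
      (simp only: eigenstate_density_invariant[OF eigen lam1] density)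
qed

end
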